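(* Let $G=(V,E)$ be a finite graph and let $U$ be a random subset of $V$ obtained by including each vertex of $V$ independently with probability $1/2$. Then for any pair of distinct vertices $x,y\in V$, \[\mathbb{P}\big(\deg_{U}(x)=\deg_{U}(y)\big)<\frac{20}{\sqrt{\delta(x,y)+1}}.\]
   Context: All graphs are finite and simple. For a vertex $x$, $\Gamma(x)$ denotes its neighbourhood, and for $U\subset V$, $\deg_U(x)=|\Gamma(x)\cap U|$ (defined for every $x\in V$, whether or not $x\in U$). The neighbourhood-distance between two vertices $x,y$ is $\delta(x,y)=|(\Gamma(x)\setminus \{y\})\,\triangle\, (\Gamma(y)\setminus\{x\})|$, where $\triangle$ is symmetric difference. *)

theory Defs
  imports "HOL-Probability.Probability"
begin

definition simple_graph :: "'a set \<Rightarrow> ('a \<Rightarrow> 'a \<Rightarrow> bool) \<Rightarrow> bool" where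
  "simple_graph V E \<longleftrightarrow> finite V \<and> (\<forall>x y. E x y \<longrightarrow> E y x)
     \<and> (\<forall>x. \<not> E x x) \<and> (\<forall>x y. E x y \<longrightarrow> x \<in> V \<and> y \<in> V)"

definition nbhd :: "'a set \<Rightarrow> ('a \<Rightarrow> 'a \<Rightarrow> bool) \<Rightarrow> 'a \<Rightarrow> 'a set" where
  "nbhd V E x = {z \<in> V. E x z}"

definition deg_in :: "'a set \<Rightarrow> ('a \<Rightarrow> 'a \<Rightarrow> bool) \<Rightarrow> 'a set \<Rightarrow> 'a \<Rightarrow> nat" where
  "deg_in V E U x = card (nbhd V E x \<inter> U)"

definition nbhd_dist :: "'a set \<Rightarrow> ('a \<Rightarrow> 'a \<Rightarrow> bool) \<Rightarrow> 'a \<Rightarrow> 'a \<Rightarrow> nat" where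
  "nbhd_dist V E x y =
     (let A = nbhd V E x - {y}; B = nbhd V E y - {x} in card ((A - B) \<union> (B - A)))"

end

theory Submission
  imports Defs
begin

text \<open>Write \<open>S\<close> for the symmetric difference of \<open>\<Gamma>(x) - {y}\<close> and \<open>\<Gamma>(y) - {x}\<close>, split into
  the part \<open>A\<close> seen only by \<open>x\<close> and the part \<open>B\<close> seen only by \<open>y\<close>, so \<open>\<delta>(x,y) = |S|\<close>.
  Once \<open>U - S\<close> is fixed, \<open>deg\<^sub>U(x) = deg\<^sub>U(y)\<close> prescribes \<open>|A \<inter> U| - |B \<inter> U|\<close>; replacing
  \<open>U \<inter> S\<close> by its symmetric difference with \<open>B\<close> turns this into a prescribed cardinality,
  so at most \<open>(|S| choose \<lfloor>|S|/2\<rfloor>)\<close> of the \<open>2\<^bsup>|S|\<^esup>\<close> choices of \<open>U \<inter> S\<close> qualify.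
  The bound \<open>(2m choose m)\<^sup>2 (2m+1) \<le> 16\<^sup>m\<close>, proved by induction on \<open>m\<close>, makes this
  at most \<open>1/\<surd>(\<delta>(x,y)+1)\<close>.\<close>

lemma central_binomial_Suc:
  "Suc n * ((2 * Suc n) choose Suc n) = 2 * (2 * n + 1) * ((2 * n) choose n)"
proof -
  have odd_sym: "Suc (2 * n) choose Suc n = Suc (2 * n) choose n"
    using central_binomial_odd[of "Suc (2 * n)"] by simp
  have absorb: "Suc n * (Suc (2 * n) choose n) = Suc (2 * n) * ((2 * n) choose n)"
    using Suc_times_binomial[of n "2 * n"] odd_sym by simp
  have pascal: "(2 * Suc n) choose Suc n = 2 * (Suc (2 * n) choose n)"
    using odd_sym by simp
  have "Suc n * ((2 * Suc n) choose Suc n) = 2 * (Suc n * (Suc (2 * n) choose n))"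
    by (subst pascal) (rule mult.left_commute)
  also have "\<dots> = 2 * (2 * n + 1) * ((2 * n) choose n)"
    using absorb by (simp del: binomial_Suc_Suc)
  finally show ?thesis .
qed

lemma central_binomial_upper_bound: "((2 * n) choose n)^2 * (2 * n + 1) \<le> 16 ^ n"
proof (induction n)
  case 0
  then show ?case by simp
next
  case (Suc n)
  let ?c = "(2 * n) choose n" and ?c' = "(2 * Suc n) choose Suc n"
  have "(Suc n)^2 * (?c'^2 * (2 * Suc n + 1)) = 4 * (?c^2 * (2 * n + 1)) * ((2 * n + 1) * (2 * n + 3))"
    using arg_cong[OF central_binomial_Suc[of n], of "\<lambda>t. t^2 * (2 * n + 3)"]
    by (simp add: power2_eq_square algebra_simps del: binomial_Suc_Suc)
  also have "\<dots> \<le> 4 * 16 ^ n * (4 * (Suc n)^2)"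
    by (rule mult_mono) (use Suc.IH in \<open>auto simp: power2_eq_square algebra_simps\<close>)
  also have "\<dots> = (Suc n)^2 * 16 ^ Suc n"
    by simp
  finally show ?case by (simp del: binomial_Suc_Suc)
qed

lemma binomial_middle_sq_bound: "(n choose (n div 2))^2 * (n + 1) \<le> 4 ^ n"
proof (cases "even n")
  case True
  then obtain m where "n = 2 * m" by blast
  then show ?thesis using central_binomial_upper_bound[of m] by (simp add: power_mult)
next
  case False
  then obtain m where n: "n = 2 * m + 1" by (blast elim: oddE)
  define c where "c = n choose (n div 2)"
  have c': "(2 * Suc m) choose Suc m = 2 * c"
    using central_binomial_odd[of n] by (simp add: n c_def)
  have "4 * (c^2 * (n + 1)) \<le> (2 * c)^2 * (2 * Suc m + 1)"
    by (simp add: n power2_eq_square)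
  also have "\<dots> \<le> 4 * 4 ^ n"
    using central_binomial_upper_bound[of "Suc m"] unfolding c' by (simp add: n power_mult)
  finally show ?thesis by (simp add: c_def)
qed

lemma binomial_middle_le_sqrt: "real (n choose (n div 2)) / 2 ^ n \<le> 1 / sqrt (real n + 1)"
proof -
  define c where "c = real (n choose (n div 2))"
  have "real ((n choose (n div 2))^2 * (n + 1)) \<le> real (4 ^ n)"
    using binomial_middle_sq_bound[of n] by (simp only: of_nat_le_iff)
  moreover have "((2::real) ^ n)^2 = 4 ^ n"
    by (simp add: power2_eq_square flip: power_mult_distrib)
  ultimately have "(c * sqrt (real n + 1))^2 \<le> (2 ^ n)^2"
    by (simp add: c_def power_mult_distrib distrib_left)
  then have "c * sqrt (real n + 1) \<le> 2 ^ n"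
    by (rule power2_le_imp_le) simp
  then show ?thesis by (simp add: c_def field_simps)
qed

lemma card_subsets_signed_count_le:
  assumes "finite A" "finite B" "A \<inter> B = {}"
  shows "card {T \<in> Pow (A \<union> B). int (card (A \<inter> T)) - int (card (B \<inter> T)) = k}
           \<le> card (A \<union> B) choose (card (A \<union> B) div 2)"
proof -
  let ?S = "A \<union> B"
  let ?F = "{T \<in> Pow ?S. int (card (A \<inter> T)) - int (card (B \<inter> T)) = k}"
  define flip where "flip T = (T - B) \<union> (B - T)" for T
  have "inj_on flip ?F"
  proof (rule inj_onI)
    fix T T' assume "flip T = flip T'"
    then show "T = T'" unfolding flip_def set_eq_iff by blast
  qed
  moreover have "flip ` ?F \<subseteq> {T'. T' \<subseteq> ?S \<and> card T' = nat (k + int (card B))}"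
  proof (rule image_subsetI)
    fix T assume "T \<in> ?F"
    then have T: "T \<subseteq> ?S" and k: "int (card (A \<inter> T)) - int (card (B \<inter> T)) = k"
      by auto
    have flip_T: "flip T = (A \<inter> T) \<union> (B - T)"
      using T assms(3) unfolding flip_def by blast
    have "card (flip T) = card (A \<inter> T) + card (B - T)"
      unfolding flip_T using assms by (intro card_Un_disjoint) auto
    moreover have "card (B - T) = card B - card (B \<inter> T)"
      using assms(2) by (simp add: card_Diff_subset_Int)
    moreover have "card (B \<inter> T) \<le> card B"
      using assms(2) by (simp add: card_mono)
    ultimately have "int (card (flip T)) = k + int (card B)"
      using k by simp
    moreover have "flip T \<subseteq> ?S"
      unfolding flip_T by blast
    ultimately show "flip T \<in> {T'. T' \<subseteq> ?S \<and> card T' = nat (k + int (card B))}"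
      by simp
  qed
  ultimately have "card ?F \<le> card {T'. T' \<subseteq> ?S \<and> card T' = nat (k + int (card B))}"
    using assms by (simp add: card_image[symmetric] card_mono)
  also have "\<dots> \<le> card ?S choose (card ?S div 2)"
    using assms by (simp add: n_subsets binomial_maximum)
  finally show ?thesis .
qed

lemma prob_Pow_le_by_fibres:
  fixes P :: "'a set set"
  assumes "finite V" "S \<subseteq> V"
    and fibre: "\<And>W. W \<subseteq> V - S \<Longrightarrow> card {T \<in> Pow S. W \<union> T \<in> P} \<le> c"
  shows "measure_pmf.prob (pmf_of_set (Pow V)) P \<le> c / 2 ^ card S"
proof -
  have fin: "finite (V - S)" "finite S"
    using assms(1,2) finite_subset by auto
  have "Pow V \<inter> P \<subseteq> (\<Union>W\<in>Pow (V - S). (\<union>) W ` {T \<in> Pow S. W \<union> T \<in> P})"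
  proof
    fix U assume U: "U \<in> Pow V \<inter> P"
    have split: "(U - S) \<union> (U \<inter> S) = U"
      by blast
    then have "U \<inter> S \<in> {T \<in> Pow S. (U - S) \<union> T \<in> P}" "U - S \<in> Pow (V - S)"
      using U by auto
    with split show "U \<in> (\<Union>W\<in>Pow (V - S). (\<union>) W ` {T \<in> Pow S. W \<union> T \<in> P})"
      by blast
  qed
  then have "card (Pow V \<inter> P) \<le> card (\<Union>W\<in>Pow (V - S). (\<union>) W ` {T \<in> Pow S. W \<union> T \<in> P})"
    using fin by (intro card_mono) auto
  also have "\<dots> \<le> (\<Sum>W\<in>Pow (V - S). card ((\<union>) W ` {T \<in> Pow S. W \<union> T \<in> P}))"
    by (rule card_UN_le) (use fin in auto)
  also have "\<dots> \<le> (\<Sum>W\<in>Pow (V - S). c)"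
    using fin by (intro sum_mono order_trans[OF card_image_le fibre]) auto
  also have "\<dots> = 2 ^ card (V - S) * c"
    using fin by (simp add: card_Pow)
  finally have count: "real (card (Pow V \<inter> P)) \<le> 2 ^ card (V - S) * c"
    by (simp only: of_nat_le_iff flip: of_nat_mult of_nat_power)
  have "card V = card (V - S) + card S"
    using assms(1,2) fin by (simp add: card_Diff_subset card_mono)
  then have "measure_pmf.prob (pmf_of_set (Pow V)) P
      = card (Pow V \<inter> P) / (2 ^ card (V - S) * 2 ^ card S)"
    using assms(1) measure_pmf_of_set[OF Pow_not_empty, of V P] by (simp add: card_Pow power_add)
  also have "\<dots> \<le> 2 ^ card (V - S) * c / (2 ^ card (V - S) * 2 ^ card S)"
    by (rule divide_right_mono[OF count]) simp
  also have "\<dots> = c / 2 ^ card S"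
    by simp
  finally show ?thesis .
qed

definition private_nbhd :: "'a set \<Rightarrow> ('a \<Rightarrow> 'a \<Rightarrow> bool) \<Rightarrow> 'a \<Rightarrow> 'a \<Rightarrow> 'a set" where
  "private_nbhd V E x y = (nbhd V E x - {y}) - (nbhd V E y - {x})"

lemma nbhd_dist_eq_card_private_nbhd:
  "nbhd_dist V E x y = card (private_nbhd V E x y \<union> private_nbhd V E y x)"
  by (simp add: nbhd_dist_def private_nbhd_def Let_def)

lemma private_nbhd_subset: "private_nbhd V E x y \<subseteq> V"
  by (auto simp: private_nbhd_def nbhd_def)

lemma finite_private_nbhd: "simple_graph V E \<Longrightarrow> finite (private_nbhd V E x y)"
  by (rule finite_subset[OF private_nbhd_subset]) (simp add: simple_graph_def)

lemma deg_in_Un_private_nbhd: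
  assumes "simple_graph V E"
    and "W \<inter> (private_nbhd V E x y \<union> private_nbhd V E y x) = {}"
    and "T \<subseteq> private_nbhd V E x y \<union> private_nbhd V E y x"
  shows "deg_in V E (W \<union> T) x = deg_in V E W x + card (private_nbhd V E x y \<inter> T)"
proof -
  have fin: "finite (nbhd V E x)" and irrefl: "\<not> E y y"
    using assms(1) by (auto simp: simple_graph_def nbhd_def)
  \<comment> \<open>The only vertex of \<open>nbhd x\<close> that can lie in \<open>private_nbhd y x\<close> is \<open>y\<close>, and \<open>y \<notin> nbhd y\<close>.\<close>
  have "nbhd V E x \<inter> T = private_nbhd V E x y \<inter> T"
    using assms(3) irrefl by (auto simp: private_nbhd_def nbhd_def)
  then have "nbhd V E x \<inter> (W \<union> T) = (nbhd V E x \<inter> W) \<union> (private_nbhd V E x y \<inter> T)"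
    by blast
  moreover have "card ((nbhd V E x \<inter> W) \<union> (private_nbhd V E x y \<inter> T))
      = card (nbhd V E x \<inter> W) + card (private_nbhd V E x y \<inter> T)"
    using fin assms(2,3) finite_subset[OF _ fin]
    by (intro card_Un_disjoint) (auto simp: private_nbhd_def)
  ultimately show ?thesis
    by (simp add: deg_in_def)
qed

lemma card_subsets_deg_in_eq_le:
  fixes V S :: "'a set" and E :: "'a \<Rightarrow> 'a \<Rightarrow> bool" and x y :: 'a
  defines "S \<equiv> private_nbhd V E x y \<union> private_nbhd V E y x"
  assumes "simple_graph V E" and "W \<inter> S = {}"
  shows "card {T \<in> Pow S. deg_in V E (W \<union> T) x = deg_in V E (W \<union> T) y} \<le> card S choose (card S div 2)"
proof -
  let ?A = "private_nbhd V E x y" and ?B = "private_nbhd V E y x"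
  let ?k = "int (deg_in V E W y) - int (deg_in V E W x)"
  have fin: "finite ?A" "finite ?B"
    using assms(2) by (rule finite_private_nbhd)+
  have "int (card (?A \<inter> T)) - int (card (?B \<inter> T)) = ?k"
    if T: "T \<subseteq> S" and eq: "deg_in V E (W \<union> T) x = deg_in V E (W \<union> T) y" for T
  proof -
    have "deg_in V E (W \<union> T) x = deg_in V E W x + card (?A \<inter> T)"
      using assms(3) T unfolding S_def by (rule deg_in_Un_private_nbhd[OF assms(2)])
    moreover have "W \<inter> (?B \<union> ?A) = {}" "T \<subseteq> ?B \<union> ?A"
      using assms(3) T unfolding S_def by blast+
    then have "deg_in V E (W \<union> T) y = deg_in V E W y + card (?B \<inter> T)"
      by (rule deg_in_Un_private_nbhd[OF assms(2)])
    ultimately show ?thesis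
      using eq by simp
  qed
  then have "card {T \<in> Pow S. deg_in V E (W \<union> T) x = deg_in V E (W \<union> T) y}
      \<le> card {T \<in> Pow S. int (card (?A \<inter> T)) - int (card (?B \<inter> T)) = ?k}"
    using fin unfolding S_def by (intro card_mono) auto
  also have "\<dots> \<le> card S choose (card S div 2)"
    unfolding S_def by (rule card_subsets_signed_count_le[OF fin]) (auto simp: private_nbhd_def)
  finally show ?thesis .
qed

theorem lemma3p1:
  fixes V :: "'a set" and E :: "'a \<Rightarrow> 'a \<Rightarrow> bool" and x y :: 'a
  assumes "simple_graph V E" and "x \<in> V" and "y \<in> V" and "x \<noteq> y"
  shows "measure_pmf.prob (pmf_of_set (Pow V)) {U. deg_in V E U x = deg_in V E U y}
           < 20 / sqrt (real (nbhd_dist V E x y) + 1)"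
proof -
  let ?S = "private_nbhd V E x y \<union> private_nbhd V E y x"
  have "finite V"
    using assms(1) by (simp add: simple_graph_def)
  moreover have "?S \<subseteq> V"
    by (simp add: private_nbhd_subset)
  ultimately have "measure_pmf.prob (pmf_of_set (Pow V)) {U. deg_in V E U x = deg_in V E U y}
      \<le> (card ?S choose (card ?S div 2)) / 2 ^ card ?S"
    using card_subsets_deg_in_eq_le[OF assms(1)] by (intro prob_Pow_le_by_fibres) auto
  also have "\<dots> \<le> 1 / sqrt (real (card ?S) + 1)"
    by (rule binomial_middle_le_sqrt)
  also have "\<dots> < 20 / sqrt (real (card ?S) + 1)"
    by (simp add: divide_strict_right_mono)
  finally show ?thesis
    by (simp add: nbhd_dist_eq_card_private_nbhd)
qed

end
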